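(* Let $(\mathcal{F}_t)$ be a filtration. Let $\varepsilon_t = \sigma_t z_t$ with $\sigma_t = \exp(H_t)$, $H_t = \bar{H}_t + h_t$, where $\bar{H}_t = E\{H_t\mid\mathcal{F}_{t-1}\}$ is $\mathcal{F}_{t-1}$-measurable, $(h_t)$ is i.i.d. with Laplace density $\frac{1}{2\Delta}\exp(-|x|/\Delta)$, $\Delta = E|h_t|>0$, and $(z_t)$ is i.i.d. $\mathcal{N}(0,1)$, with $z_t$, $h_t$ mutually independent and independent of $\mathcal{F}_{t-1}$. For $\Lambda > 0$ put $\widetilde{\Lambda}_t = \Lambda/(\sqrt{2}e^{\bar{H}_t})$. Then, as $\widetilde{\Lambda}_t \to \infty$, $$P\{|\varepsilon_t| \ge \Lambda \mid \mathcal{F}_{t-1}\} = \frac{1}{2\sqrt{\pi}}\,\Gamma\!\left(\frac{1+1/\Delta}{2}\right)\widetilde{\Lambda}_t^{-1/\Delta} + O\!\left(\widetilde{\Lambda}_t^{-5}e^{-\widetilde{\Lambda}_t^2}\right).$$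
   Context: $\Gamma(\cdot)$ denotes the gamma function. *)

theory Defs
  imports "HOL-Probability.Probability"
begin

definition laplace_density :: "real \<Rightarrow> real \<Rightarrow> real" where
  "laplace_density D x = exp (- \<bar>x\<bar> / D) / (2 * D)"

end

theory Submission
  imports Defs
begin

(* Conditioning on F freezes Hbar, and (z, h) is independent of F, so the conditional tail
   probability is Q (Lambda / exp Hbar) with Q L = P (exp h * |z| >= L).  Integrating out the
   Laplace variable h (scale Delta = 1/p) first gives P (exp h * |v| >= L) = (|v|/L)^p / 2 for
   |v| <= L and 1 - (L/|v|)^p / 2 otherwise.  Using (|v|/L)^p / 2 everywhere produces exactly the
   main term, since E |z|^p = 2^(p/2) Gamma ((p+1)/2) / sqrt pi.  The defect lives on |v| > L,
   where with u = |v|/L it equals (u^p + u^-p)/2 - 1 <= p^2 (u-1)^2 u^p / 2; shifting v = L + t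
   and using phi (L + t) <= phi L * exp (- L t) reduces it to a Gamma integral of size
   phi L * p^2 / L^5, which is O (L'^-5 exp (- L'^2)) for L = sqrt 2 * L'. *)

lemma has_integral_Gamma_half_square:
  fixes s :: real
  assumes s: "s > 0"
  shows "((\<lambda>v. v * ((v\<^sup>2 / 2) powr (s - 1) / exp (v\<^sup>2 / 2))) has_integral Gamma s) {0<..}"
proof -
  define f where "f = (\<lambda>t::real. t powr (s - 1) / exp t)"
  have "(f has_integral Gamma s) {0<..}"
    using Gamma_integral_real[OF s] unfolding f_def[symmetric]
    by (rule has_integral_spike_set_eq[THEN iffD1, rotated 2])
      (auto intro: negligible_subset[of "{0}"])
  moreover have "(\<lambda>v::real. v\<^sup>2 / 2) ` {0<..} = {0<..}"
  proof (intro equalityI subsetI)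
    fix t :: real assume "t \<in> {0<..}"
    then have "t = (sqrt (2 * t))\<^sup>2 / 2" "sqrt (2 * t) \<in> {0<..}" by auto
    then show "t \<in> (\<lambda>v. v\<^sup>2 / 2) ` {0<..}" by blast
  qed auto
  ultimately have "f absolutely_integrable_on (\<lambda>v. v\<^sup>2 / 2) ` {0<..} \<and>
      integral ((\<lambda>v. v\<^sup>2 / 2) ` {0<..}) f = Gamma s"
    by (auto intro: nonnegative_absolutely_integrable_1 simp: f_def)
  then have "(\<lambda>v. \<bar>v\<bar> * f (v\<^sup>2 / 2)) absolutely_integrable_on {0<..} \<and>
      integral {0<..} (\<lambda>v. \<bar>v\<bar> * f (v\<^sup>2 / 2)) = Gamma s"
    by (subst has_absolute_integral_change_of_variables_1'[where g' = "\<lambda>x. x"])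
       (auto intro!: derivative_eq_intros inj_onI simp: power2_eq_iff_nonneg)
  then have "((\<lambda>v. \<bar>v\<bar> * f (v\<^sup>2 / 2)) has_integral Gamma s) {0<..}"
    using set_lebesgue_integral_eq_integral(1) by (metis has_integral_integral)
  then show ?thesis
    by (rule has_integral_cong[THEN iffD1, rotated]) (simp add: f_def)
qed

lemma has_bochner_integral_powr_gaussian_atLeast0:
  fixes p :: real
  assumes p: "p > -1"
  shows "has_bochner_integral lborel (\<lambda>v. indicator {0..} v * (v powr p * exp (- v\<^sup>2 / 2)))
           (2 powr ((p - 1) / 2) * Gamma ((p + 1) / 2))"
proof -
  define s where "s = (p + 1) / 2"
  have s: "s > 0" using p by (simp add: s_def)
  define c where "c = 2 powr ((p - 1) / 2)"
  define g where "g = (\<lambda>v::real. v powr p * exp (- v\<^sup>2 / 2))"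
  have "v * ((v\<^sup>2 / 2) powr (s - 1) / exp (v\<^sup>2 / 2)) = g v / c" if v: "v \<in> {0<..}" for v
  proof -
    have v: "v > 0" using v by simp
    have "v * (v\<^sup>2 / 2) powr (s - 1) = exp (ln v + (s - 1) * ln (v\<^sup>2 / 2))"
      using v by (simp add: powr_def exp_add)
    also have "ln v + (s - 1) * ln (v\<^sup>2 / 2) = p * ln v - (p - 1) / 2 * ln 2"
      using v by (simp add: s_def ln_div ln_realpow field_simps)
    also have "exp (p * ln v - (p - 1) / 2 * ln 2) = v powr p / c"
      using v by (simp add: c_def powr_def exp_diff)
    finally show ?thesis
      using v by (simp add: g_def exp_minus field_simps)
  qed
  then have "((\<lambda>v. g v / c) has_integral Gamma s) {0<..}"
    by (rule has_integral_cong[THEN iffD1, OF _ has_integral_Gamma_half_square[OF s]])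
  then have "((\<lambda>v. c * (g v / c)) has_integral c * Gamma s) {0<..}"
    by (rule has_integral_mult_right)
  then have "(g has_integral c * Gamma s) {0<..}"
    by (simp add: c_def)
  then have "((\<lambda>v. if v \<in> {0<..} then g v else 0) has_integral c * Gamma s) UNIV"
    by (simp only: has_integral_restrict_UNIV)
  also have "(\<lambda>v. if v \<in> {0<..} then g v else 0) = (\<lambda>v. indicator {0..} v * g v)"
    by (auto simp: indicator_def g_def)
  finally have "(\<integral>\<^sup>+v. indicator {0..} v * g v \<partial>lborel) = c * Gamma s"
    by (intro nn_integral_has_integral_lborel) (auto simp: g_def)
  then show ?thesis
    unfolding c_def s_def g_def using Gamma_real_pos[OF s]
    by (intro has_bochner_integral_nn_integral) (auto simp: s_def)
qed

lemma has_bochner_integral_std_normal_abs_moment: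
  fixes p :: real
  assumes p: "p > -1"
  shows "has_bochner_integral lborel (\<lambda>v. std_normal_density v * \<bar>v\<bar> powr p)
           (2 powr (p / 2) * Gamma ((p + 1) / 2) / sqrt pi)"
proof -
  have "has_bochner_integral lborel (\<lambda>v. indicator {0..} v *\<^sub>R (std_normal_density v * \<bar>v\<bar> powr p))
      (1 / sqrt (2 * pi) * (2 powr ((p - 1) / 2) * Gamma ((p + 1) / 2)))"
    using has_bochner_integral_mult_right[where c = "1 / sqrt (2 * pi)",
        OF has_bochner_integral_powr_gaussian_atLeast0[OF p]]
    by (rule has_bochner_integral_cong[THEN iffD1, rotated 3])
       (auto simp: std_normal_density_def indicator_def)
  then have "has_bochner_integral lborel (\<lambda>v. std_normal_density v * \<bar>v\<bar> powr p)
      (2 *\<^sub>R (1 / sqrt (2 * pi) * (2 powr ((p - 1) / 2) * Gamma ((p + 1) / 2))))"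
    by (rule has_bochner_integral_even_function) (simp add: std_normal_density_def)
  also have "2 *\<^sub>R (1 / sqrt (2 * pi) * (2 powr ((p - 1) / 2) * Gamma ((p + 1) / 2))) =
      2 powr (p / 2) * Gamma ((p + 1) / 2) / sqrt pi"
  proof -
    have "p / 2 + 1 / 2 = 1 + (p - 1) / 2"
      by (simp add: field_simps)
    then have "2 * 2 powr ((p - 1) / 2) = 2 powr (p / 2 + 1 / 2)"
      by (simp only: powr_add) simp
    also have "\<dots> = 2 powr (p / 2) * sqrt 2"
      by (simp add: powr_add powr_half_sqrt)
    finally have "2 * 2 powr ((p - 1) / 2) = 2 powr (p / 2) * sqrt 2" .
    then show ?thesis by (simp add: real_sqrt_mult field_simps)
  qed
  finally show ?thesis .
qed

lemma laplace_density_measurable[measurable]: "laplace_density D \<in> borel_measurable borel"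
  unfolding laplace_density_def by measurable

lemma nn_integral_laplace_density_atLeast_nonneg:
  fixes D b :: real
  assumes D: "D > 0" and b: "0 \<le> b"
  shows "(\<integral>\<^sup>+u. ennreal (laplace_density D u) * indicator {b..} u \<partial>lborel)
           = ennreal (exp (- b / D) / 2)"
proof -
  have "(\<integral>\<^sup>+u. ennreal (laplace_density D u) * indicator {b..} u \<partial>lborel)
      = ennreal (0 - (- exp (- b / D) / 2))"
  proof (rule nn_integral_FTC_atLeast[OF laplace_density_measurable])
    fix x assume "b \<le> x"
    then show "((\<lambda>u. - exp (- u / D) / 2) has_real_derivative laplace_density D x) (at x)"
      using D b by (auto intro!: derivative_eq_intros simp: laplace_density_def field_simps)
  next
    show "((\<lambda>u. - exp (- u / D) / 2) \<longlongrightarrow> 0) at_top"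
      using D by real_asymp
  qed (use D in \<open>simp add: laplace_density_def\<close>)
  then show ?thesis by simp
qed

lemma nn_integral_laplace_density_atLeast:
  fixes D a :: real
  assumes D: "D > 0"
  shows "(\<integral>\<^sup>+u. ennreal (laplace_density D u) * indicator {a..} u \<partial>lborel)
         = ennreal (if 0 \<le> a then exp (- a / D) / 2 else 1 - exp (a / D) / 2)"
proof (cases "0 \<le> a")
  case True
  then show ?thesis using nn_integral_laplace_density_atLeast_nonneg[OF D] by simp
next
  case False
  have "(\<integral>\<^sup>+u\<in>{a..0}. ennreal (laplace_density D u) \<partial>lborel)
      = ennreal (exp (0 / D) / 2 - exp (a / D) / 2)"
  proof (rule nn_integral_FTC_Icc[OF laplace_density_measurable])
    fix x assume "x \<in> {a..0}"
    then show "((\<lambda>u. exp (u / D) / 2) has_real_derivative laplace_density D x) (at x)"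
      using D by (auto intro!: derivative_eq_intros simp: laplace_density_def field_simps)
  qed (use D False in \<open>auto simp: laplace_density_def\<close>)
  then have left: "(\<integral>\<^sup>+u. ennreal (laplace_density D u) * indicator {a..0} u \<partial>lborel)
      = ennreal (1 / 2 - exp (a / D) / 2)"
    by (simp add: mult.commute)
  have "(\<integral>\<^sup>+u. ennreal (laplace_density D u) * indicator {a..} u \<partial>lborel) =
      (\<integral>\<^sup>+u. ennreal (laplace_density D u) * indicator {a..0} u
             + ennreal (laplace_density D u) * indicator {0..} u \<partial>lborel)"
    using AE_lborel_singleton[of 0]
    by (intro nn_integral_cong_AE, eventually_elim) (use False in \<open>auto simp: indicator_def\<close>)
  also have "\<dots> = ennreal (1 / 2 - exp (a / D) / 2) + ennreal (1 / 2)"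
    using left nn_integral_laplace_density_atLeast_nonneg[OF D, of 0]
    by (subst nn_integral_add) auto
  also have "\<dots> = ennreal (1 - exp (a / D) / 2)"
    using False D by (subst ennreal_plus[symmetric]) (auto simp: divide_nonpos_pos)
  finally show ?thesis using False by simp
qed

definition exp_laplace_tail :: "real \<Rightarrow> real \<Rightarrow> real \<Rightarrow> real" where
  "exp_laplace_tail p L v =
     (if \<bar>v\<bar> \<le> L then (\<bar>v\<bar> / L) powr p / 2 else 1 - (L / \<bar>v\<bar>) powr p / 2)"

lemma exp_laplace_tail_bounds:
  assumes "p > 0" "L > 0"
  shows "0 \<le> exp_laplace_tail p L v" "exp_laplace_tail p L v \<le> 1"
proof -
  have "(\<bar>v\<bar> / L) powr p \<le> 1" if "\<bar>v\<bar> \<le> L"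
    using that assms powr_mono2[of p "\<bar>v\<bar> / L" 1] by simp
  moreover have "(L / \<bar>v\<bar>) powr p \<le> 1" if "\<not> \<bar>v\<bar> \<le> L"
    using that assms powr_mono2[of p "L / \<bar>v\<bar>" 1] by simp
  ultimately show "0 \<le> exp_laplace_tail p L v" "exp_laplace_tail p L v \<le> 1"
    by (auto simp: exp_laplace_tail_def)
qed

lemma exp_laplace_tail_measurable[measurable]:
  "exp_laplace_tail p L \<in> borel_measurable borel"
  unfolding exp_laplace_tail_def by measurable

lemma nn_integral_laplace_density_exp_ge:
  fixes D L v :: real
  assumes D: "D > 0" and L: "L > 0"
  shows "(\<integral>\<^sup>+u. ennreal (laplace_density D u) * indicator {u. L \<le> exp u * \<bar>v\<bar>} u \<partial>lborel)
         = ennreal (exp_laplace_tail (1 / D) L v)"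
proof (cases "v = 0")
  case True
  then show ?thesis using L by (simp add: exp_laplace_tail_def)
next
  case False
  define a where "a = ln (L / \<bar>v\<bar>)"
  have "L \<le> exp u * \<bar>v\<bar> \<longleftrightarrow> a \<le> u" for u
  proof -
    have "L \<le> exp u * \<bar>v\<bar> \<longleftrightarrow> L / \<bar>v\<bar> \<le> exp u" using False by (simp add: field_simps)
    also have "\<dots> \<longleftrightarrow> a \<le> u"
      unfolding a_def using False L by (subst ln_le_cancel_iff[symmetric]) auto
    finally show ?thesis .
  qed
  then have "{u. L \<le> exp u * \<bar>v\<bar>} = {a..}" by auto
  moreover have "0 \<le> a \<longleftrightarrow> \<bar>v\<bar> \<le> L" using False L by (simp add: a_def)
  moreover have "exp (- a / D) = (\<bar>v\<bar> / L) powr (1 / D)" "exp (a / D) = (L / \<bar>v\<bar>) powr (1 / D)"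
    using False L by (simp_all add: a_def powr_def ln_div)
  ultimately show ?thesis
    by (simp add: nn_integral_laplace_density_atLeast[OF D] exp_laplace_tail_def)
qed

lemma half_powr_add_inverse_bounds:
  fixes p u :: real
  assumes p: "p > 0" and u: "u > 1"
  shows "0 \<le> (u powr p + (1 / u) powr p) / 2 - 1"
    and "(u powr p + (1 / u) powr p) / 2 - 1 \<le> p\<^sup>2 / 2 * (u - 1)\<^sup>2 * u powr p"
proof -
  define x where "x = u powr p"
  have x: "x \<ge> 1" using p u by (simp add: x_def ge_one_powr_ge_zero)
  have defect: "(u powr p + (1 / u) powr p) / 2 - 1 = (x - 1)\<^sup>2 / (2 * x)"
    using x u by (simp add: x_def powr_divide field_simps power2_eq_square)
  then show "0 \<le> (u powr p + (1 / u) powr p) / 2 - 1"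
    using x by simp
  have "x - 1 \<le> p * ln u * x"
  proof -
    have "1 - p * ln u \<le> exp (- (p * ln u))"
      using exp_ge_add_one_self[of "- (p * ln u)"] by simp
    then have "(1 - p * ln u) * x \<le> 1"
      using u by (simp add: x_def powr_def exp_minus field_simps)
    then show ?thesis by (simp add: algebra_simps)
  qed
  also have "\<dots> \<le> p * (u - 1) * x"
    using p u x ln_le_minus_one[of u] by (intro mult_right_mono mult_left_mono) auto
  finally have "(x - 1)\<^sup>2 \<le> (p * (u - 1) * x)\<^sup>2"
    using x by (intro power_mono) auto
  then have "(x - 1)\<^sup>2 / (2 * x) \<le> (p * (u - 1) * x)\<^sup>2 / (2 * x)"
    using x by (intro divide_right_mono) auto
  also have "\<dots> = p\<^sup>2 / 2 * (u - 1)\<^sup>2 * x"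
    using x by (simp add: power2_eq_square field_simps)
  finally show "(u powr p + (1 / u) powr p) / 2 - 1 \<le> p\<^sup>2 / 2 * (u - 1)\<^sup>2 * u powr p"
    unfolding defect x_def .
qed

lemma exp_laplace_tail_defect_bounds:
  fixes p L v :: real
  assumes p: "p > 0" and L: "L > 0"
  shows "0 \<le> (\<bar>v\<bar> / L) powr p / 2 - exp_laplace_tail p L v"
    and "(\<bar>v\<bar> / L) powr p / 2 - exp_laplace_tail p L v
           \<le> indicator {L<..} \<bar>v\<bar> * (p\<^sup>2 / 2 * (\<bar>v\<bar> / L - 1)\<^sup>2 * (\<bar>v\<bar> / L) powr p)"
proof -
  have "0 \<le> (\<bar>v\<bar> / L) powr p / 2 - exp_laplace_tail p L v \<and>
      (\<bar>v\<bar> / L) powr p / 2 - exp_laplace_tail p L v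
        \<le> indicator {L<..} \<bar>v\<bar> * (p\<^sup>2 / 2 * (\<bar>v\<bar> / L - 1)\<^sup>2 * (\<bar>v\<bar> / L) powr p)"
  proof (cases "\<bar>v\<bar> \<le> L")
    case True
    then show ?thesis by (simp add: exp_laplace_tail_def)
  next
    case False
    define u where "u = \<bar>v\<bar> / L"
    have u: "u > 1" using False L by (simp add: u_def)
    have defect: "u powr p / 2 - exp_laplace_tail p L v = (u powr p + (1 / u) powr p) / 2 - 1"
      using False by (simp add: exp_laplace_tail_def u_def)
    have "indicator {L<..} \<bar>v\<bar> = (1::real)" using False by simp
    then show ?thesis
      unfolding u_def[symmetric] defect using half_powr_add_inverse_bounds[OF p u] by simp
  qed
  then show "0 \<le> (\<bar>v\<bar> / L) powr p / 2 - exp_laplace_tail p L v"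
    and "(\<bar>v\<bar> / L) powr p / 2 - exp_laplace_tail p L v
           \<le> indicator {L<..} \<bar>v\<bar> * (p\<^sup>2 / 2 * (\<bar>v\<bar> / L - 1)\<^sup>2 * (\<bar>v\<bar> / L) powr p)"
    by auto
qed

lemma nn_integral_square_exp_neg_atLeast0:
  fixes l :: real
  assumes l: "l > 0"
  shows "(\<integral>\<^sup>+t. ennreal (indicator {0..} t * (t\<^sup>2 * exp (- l * t))) \<partial>lborel) = ennreal (2 / l ^ 3)"
proof -
  have "(\<integral>\<^sup>+t. ennreal (indicator {0..} t * (t\<^sup>2 * exp (- l * t))) \<partial>lborel) =
        (\<integral>\<^sup>+t. ennreal (1 / l) * ennreal (erlang_density 0 l t * t ^ 2) \<partial>lborel)"
    using l by (intro nn_integral_cong)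
      (auto simp: erlang_density_def indicator_def ennreal_mult'[symmetric] power2_eq_square)
  also have "\<dots> = ennreal (1 / l) * ennreal (fact 2 / (fact 0 * l ^ 2))"
    using nn_integral_erlang_ith_moment[OF l, of 0 2]
    by (subst nn_integral_cmult) (auto simp: erlang_density_def)
  also have "\<dots> = ennreal (2 / l ^ 3)"
    using l by (simp add: ennreal_mult'[symmetric] power3_eq_cube power2_eq_square)
  finally show ?thesis .
qed

lemma gaussian_tail_weight_shift_le:
  fixes p L t :: real
  assumes p: "p > 0" and L: "L \<ge> 1"
  shows "indicator {L<..} (L + t) * (std_normal_density (L + t)
            * (p\<^sup>2 / 2 * ((L + t) / L - 1)\<^sup>2 * ((L + t) / L) powr p))
    \<le> std_normal_density L * p\<^sup>2 / (2 * L\<^sup>2) * (indicator {0..} t * (t\<^sup>2 * exp (- (L - p) * t)))"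
proof (cases "t > 0")
  case False
  then show ?thesis using L by (simp add: indicator_def)
next
  case t: True
  have "std_normal_density (L + t) \<le> std_normal_density L * exp (- L * t)"
  proof -
    have "exp (- (L + t)\<^sup>2 / 2) \<le> exp (- L\<^sup>2 / 2) * exp (- L * t)"
      unfolding exp_add[symmetric] using t by (simp add: power2_eq_square field_simps)
    then show ?thesis by (simp add: std_normal_density_def divide_right_mono)
  qed
  moreover have "((L + t) / L) powr p \<le> exp (p * t)"
  proof -
    have "1 + t / L > 0" using L t by (simp add: add_pos_pos)
    then have "((L + t) / L) powr p = exp (p * ln (1 + t / L))"
      using L by (simp add: powr_def add_divide_distrib)
    also have "\<dots> \<le> exp (p * (t / L))"
      using p t L ln_add_one_self_le_self[of "t / L"] mult_left_mono[of "ln (1 + t / L)" "t / L" p]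
      by simp
    also have "\<dots> \<le> exp (p * t)"
      using p t L by (simp add: mult_left_mono divide_le_eq)
    finally show ?thesis .
  qed
  ultimately have "std_normal_density (L + t) * (p\<^sup>2 / 2 * (t / L)\<^sup>2 * ((L + t) / L) powr p)
      \<le> (std_normal_density L * exp (- L * t)) * (p\<^sup>2 / 2 * (t / L)\<^sup>2 * exp (p * t))"
    by (intro mult_mono mult_left_mono) auto
  also have "\<dots> = std_normal_density L * p\<^sup>2 / (2 * L\<^sup>2) * (t\<^sup>2 * exp (- (L - p) * t))"
    using L by (simp add: field_simps power2_eq_square exp_add[symmetric])
  finally have "std_normal_density (L + t) * (p\<^sup>2 / 2 * (t / L)\<^sup>2 * ((L + t) / L) powr p)
      \<le> std_normal_density L * p\<^sup>2 / (2 * L\<^sup>2) * (t\<^sup>2 * exp (- (L - p) * t))" .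
  moreover have "(L + t) / L - 1 = t / L"
    using L by (simp add: field_simps)
  ultimately show ?thesis
    using t by simp
qed

lemma nn_integral_gaussian_tail_weight_le:
  fixes p L :: real
  assumes p: "p > 0" and L: "L \<ge> 1" and pL: "p < L"
  shows "(\<integral>\<^sup>+v. ennreal (indicator {L<..} v
              * (std_normal_density v * (p\<^sup>2 / 2 * (v / L - 1)\<^sup>2 * (v / L) powr p))) \<partial>lborel)
           \<le> ennreal (std_normal_density L * p\<^sup>2 / (L\<^sup>2 * (L - p) ^ 3))"
    (is "(\<integral>\<^sup>+v. ennreal (?W v) \<partial>lborel) \<le> _")
proof -
  define C where "C = std_normal_density L * p\<^sup>2 / (2 * L\<^sup>2)"
  have C: "C \<ge> 0" by (simp add: C_def)
  have "(\<integral>\<^sup>+v. ennreal (?W v) \<partial>lborel) = (\<integral>\<^sup>+t. ennreal (?W (L + t)) \<partial>lborel)"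
    using nn_integral_real_affine[of "\<lambda>v. ennreal (?W v)" 1 L] by simp
  also have "\<dots> \<le> (\<integral>\<^sup>+t. ennreal C
      * ennreal (indicator {0..} t * (t\<^sup>2 * exp (- (L - p) * t))) \<partial>lborel)"
    using gaussian_tail_weight_shift_le[OF p L] C
    by (intro nn_integral_mono) (simp add: C_def ennreal_mult[symmetric] ennreal_leI)
  also have "\<dots> = ennreal C * ennreal (2 / (L - p) ^ 3)"
    using pL nn_integral_square_exp_neg_atLeast0[of "L - p"] by (subst nn_integral_cmult) auto
  also have "\<dots> = ennreal (std_normal_density L * p\<^sup>2 / (L\<^sup>2 * (L - p) ^ 3))"
    using C pL by (simp add: C_def ennreal_mult[symmetric])
  finally show ?thesis .
qed

lemma integrable_std_normal_exp_laplace_tail: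
  assumes "p > 0" "L > 0"
  shows "integrable lborel (\<lambda>v. std_normal_density v * exp_laplace_tail p L v)"
proof (rule Bochner_Integration.integrable_bound[where f = std_normal_density])
  show "AE v in lborel. norm (std_normal_density v * exp_laplace_tail p L v)
      \<le> norm (std_normal_density v)"
    using exp_laplace_tail_bounds[OF assms] by (intro AE_I2) (simp add: abs_mult mult_left_le)
qed auto

lemma std_normal_tail_defect_le_rescaled:
  fixes p L :: real
  assumes p: "p > 0" and L1: "L \<ge> 1" and L2: "L \<ge> 2 * p"
  shows "2 * (std_normal_density L * p\<^sup>2 / (L\<^sup>2 * (L - p) ^ 3))
           \<le> 16 * p\<^sup>2 * (L / sqrt 2) powr (-5) * exp (- ((L / sqrt 2)\<^sup>2))"
proof -
  have L: "L > 0" using L1 by simp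
  have "(L / 2) ^ 3 \<le> (L - p) ^ 3"
    using L2 p by (intro power_mono) auto
  then have "2 * (std_normal_density L * p\<^sup>2 / (L\<^sup>2 * (L - p) ^ 3))
      \<le> 2 * (std_normal_density L * p\<^sup>2 / (L\<^sup>2 * (L / 2) ^ 3))"
    using L L2 p by (intro mult_left_mono divide_left_mono mult_left_mono mult_pos_pos) auto
  also have "\<dots> = 16 * p\<^sup>2 * std_normal_density L / L ^ 5"
    by (simp add: power2_eq_square power3_eq_cube numeral_eq_Suc mult_ac)
  also have "\<dots> \<le> 16 * p\<^sup>2 * exp (- ((L / sqrt 2)\<^sup>2)) / L ^ 5"
  proof -
    have "std_normal_density L \<le> exp (- ((L / sqrt 2)\<^sup>2))"
      using pi_gt3 by (simp add: std_normal_density_def power_divide divide_le_eq)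
    then show ?thesis
      using L by (intro divide_right_mono mult_left_mono) auto
  qed
  also have "\<dots> \<le> 16 * p\<^sup>2 * exp (- ((L / sqrt 2)\<^sup>2)) * sqrt 2 ^ 5 / L ^ 5"
  proof -
    have "16 * p\<^sup>2 * exp (- ((L / sqrt 2)\<^sup>2)) * 1 \<le> 16 * p\<^sup>2 * exp (- ((L / sqrt 2)\<^sup>2)) * sqrt 2 ^ 5"
      by (intro mult_left_mono one_le_power) auto
    then show ?thesis
      using L by (intro divide_right_mono) auto
  qed
  also have "\<dots> = 16 * p\<^sup>2 * (L / sqrt 2) powr (-5) * exp (- ((L / sqrt 2)\<^sup>2))"
    using L by (simp add: powr_minus_divide powr_divide power_divide)
  finally show ?thesis .
qed

lemma has_bochner_integral_std_normal_scaled_moment: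
  fixes p L :: real
  assumes p: "p > -1" and L: "L > 0"
  shows "has_bochner_integral lborel (\<lambda>v. std_normal_density v * ((\<bar>v\<bar> / L) powr p / 2))
           (1 / (2 * sqrt pi) * Gamma ((1 + p) / 2) * (L / sqrt 2) powr (- p))"
proof -
  have "has_bochner_integral lborel (\<lambda>v. L powr (- p) / 2 * (std_normal_density v * \<bar>v\<bar> powr p))
      (L powr (- p) / 2 * (2 powr (p / 2) * Gamma ((p + 1) / 2) / sqrt pi))"
    using p
    by (intro has_bochner_integral_mult_right has_bochner_integral_std_normal_abs_moment) simp
  moreover have "L powr (- p) / 2 * (std_normal_density v * \<bar>v\<bar> powr p) =
      std_normal_density v * ((\<bar>v\<bar> / L) powr p / 2)" for v
    using L by (simp add: powr_divide powr_minus_divide)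
  moreover have "L powr (- p) / 2 * (2 powr (p / 2) * Gamma ((p + 1) / 2) / sqrt pi)
      = 1 / (2 * sqrt pi) * Gamma ((1 + p) / 2) * (L / sqrt 2) powr (- p)"
  proof -
    have "(L / sqrt 2) powr (- p) = L powr (- p) * 2 powr (p / 2)"
      using L by (simp add: powr_divide powr_minus_divide powr_half_sqrt[symmetric] powr_powr)
    then show ?thesis
      by (simp add: add.commute)
  qed
  ultimately show ?thesis
    by (simp only:)
qed

lemma nn_integral_std_normal_tail_defect_le:
  fixes p L :: real
  assumes p: "p > 0" and L: "L \<ge> 1" and pL: "p < L"
  shows "(\<integral>\<^sup>+v. ennreal (std_normal_density v * ((\<bar>v\<bar> / L) powr p / 2 - exp_laplace_tail p L v))
            \<partial>lborel)
           \<le> ennreal (2 * (std_normal_density L * p\<^sup>2 / (L\<^sup>2 * (L - p) ^ 3)))"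
proof -
  have L0: "L > 0" using L by simp
  define W where
    "W v = indicator {L<..} v * (std_normal_density v * (p\<^sup>2 / 2 * (v / L - 1)\<^sup>2 * (v / L) powr p))"
    for v
  have W_nonneg: "W v \<ge> 0" for v by (simp add: W_def)
  have [measurable]: "W \<in> borel_measurable borel" unfolding W_def by measurable
  have "std_normal_density v * ((\<bar>v\<bar> / L) powr p / 2 - exp_laplace_tail p L v) \<le> W v + W (- v)"
    for v
  proof -
    have "std_normal_density (- v) = std_normal_density v"
      by (simp add: std_normal_density_def)
    then have "std_normal_density v
        * (indicator {L<..} \<bar>v\<bar> * (p\<^sup>2 / 2 * (\<bar>v\<bar> / L - 1)\<^sup>2 * (\<bar>v\<bar> / L) powr p))
        = W v + W (- v)"
      using L0 by (cases "v \<ge> 0") (auto simp: W_def indicator_def)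
    then show ?thesis
      by (metis mult_left_mono[OF exp_laplace_tail_defect_bounds(2)[OF p L0]] normal_density_nonneg)
  qed
  then have "(\<integral>\<^sup>+v. ennreal (std_normal_density v * ((\<bar>v\<bar> / L) powr p / 2 - exp_laplace_tail p L v))
        \<partial>lborel)
      \<le> (\<integral>\<^sup>+v. ennreal (W v) + ennreal (W (- v)) \<partial>lborel)"
    using W_nonneg by (intro nn_integral_mono) (simp add: ennreal_plus[symmetric] del: ennreal_plus)
  also have "\<dots> = 2 * (\<integral>\<^sup>+v. ennreal (W v) \<partial>lborel)"
    using nn_integral_real_affine[of "\<lambda>v. ennreal (W v)" "-1" 0]
    by (simp add: nn_integral_add mult_2)
  also have "\<dots> \<le> 2 * ennreal (std_normal_density L * p\<^sup>2 / (L\<^sup>2 * (L - p) ^ 3))"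
    unfolding W_def using nn_integral_gaussian_tail_weight_le[OF p L pL]
    by (intro mult_left_mono) auto
  also have "\<dots> = ennreal (2 * (std_normal_density L * p\<^sup>2 / (L\<^sup>2 * (L - p) ^ 3)))"
    by (subst ennreal_mult) (use pL in auto)
  finally show ?thesis .
qed

lemma std_normal_exp_laplace_tail_asymptotics:
  fixes p L :: real
  assumes p: "p > 0" and L1: "L \<ge> 1" and L2: "L \<ge> 2 * p"
  shows "\<bar>(\<integral>v. std_normal_density v * exp_laplace_tail p L v \<partial>lborel)
           - 1 / (2 * sqrt pi) * Gamma ((1 + p) / 2) * (L / sqrt 2) powr (- p)\<bar>
         \<le> 16 * p\<^sup>2 * (L / sqrt 2) powr (-5) * exp (- ((L / sqrt 2)\<^sup>2))"
proof -
  have L: "L > 0" and pL: "p < L" using L1 L2 p by auto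
  define main where "main = 1 / (2 * sqrt pi) * Gamma ((1 + p) / 2) * (L / sqrt 2) powr (- p)"
  define k where
    "k v = std_normal_density v * ((\<bar>v\<bar> / L) powr p / 2 - exp_laplace_tail p L v)" for v
  have k_nonneg: "0 \<le> k v" for v
    unfolding k_def using exp_laplace_tail_defect_bounds(1)[OF p L, of v] by simp
  have "has_bochner_integral lborel k
      (main - (\<integral>v. std_normal_density v * exp_laplace_tail p L v \<partial>lborel))"
    unfolding k_def right_diff_distrib main_def
    by (rule has_bochner_integral_diff[OF has_bochner_integral_std_normal_scaled_moment
          has_bochner_integral_integrable])
      (use p L integrable_std_normal_exp_laplace_tail[OF p L] in auto)
  then have defect:
      "(\<integral>v. std_normal_density v * exp_laplace_tail p L v \<partial>lborel) = main - integral\<^sup>L lborel k"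
    and k_int: "integrable lborel k"
    by (auto simp: has_bochner_integral_iff)
  have "integral\<^sup>L lborel k \<le> 2 * (std_normal_density L * p\<^sup>2 / (L\<^sup>2 * (L - p) ^ 3))"
    using nn_integral_std_normal_tail_defect_le[OF p L1 pL] k_nonneg k_int pL
    by (subst integral_eq_nn_integral) (auto intro!: enn2real_leI simp: k_def)
  also have "\<dots> \<le> 16 * p\<^sup>2 * (L / sqrt 2) powr (-5) * exp (- ((L / sqrt 2)\<^sup>2))"
    by (rule std_normal_tail_defect_le_rescaled[OF p L1 L2])
  moreover have "0 \<le> integral\<^sup>L lborel k"
    using k_nonneg by (intro integral_nonneg_AE) auto
  ultimately show ?thesis
    unfolding defect main_def[symmetric] by simp
qed

lemma measure_std_normal_laplace_exp_ge:
  fixes D L :: real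
  assumes D: "D > 0" and L: "L > 0"
  shows "measure (density lborel (\<lambda>v. ennreal (std_normal_density v))
                    \<Otimes>\<^sub>M density lborel (\<lambda>u. ennreal (laplace_density D u)))
           {w. L \<le> exp (snd w) * \<bar>fst w\<bar>}
         = (\<integral>v. std_normal_density v * exp_laplace_tail (1 / D) L v \<partial>lborel)"
    (is "measure (?N \<Otimes>\<^sub>M ?H) ?Q = _")
proof -
  interpret H: sigma_finite_measure ?H
    by (subst sigma_finite_measure.sigma_finite_iff_density_finite'[OF sigma_finite_lborel]) auto
  have p: "1 / D > 0" using D by simp
  have "{w \<in> space (borel \<Otimes>\<^sub>M borel). L \<le> exp (snd w) * \<bar>fst w :: real\<bar>} \<in> sets (borel \<Otimes>\<^sub>M borel)"
    by measurable
  then have Q: "?Q \<in> sets (?N \<Otimes>\<^sub>M ?H)"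
    by (simp add: space_pair_measure cong: sets_pair_measure_cong)
  have "emeasure (?N \<Otimes>\<^sub>M ?H) ?Q = (\<integral>\<^sup>+v. ennreal (exp_laplace_tail (1 / D) L v) \<partial>?N)"
    using Q unfolding H.emeasure_pair_measure_alt[OF Q]
    by (intro nn_integral_cong)
      (auto simp: emeasure_density nn_integral_laplace_density_exp_ge[OF D L, symmetric]
        mult.commute)
  also have "\<dots> = (\<integral>\<^sup>+v. ennreal (std_normal_density v * exp_laplace_tail (1 / D) L v) \<partial>lborel)"
    using exp_laplace_tail_bounds[OF p L] by (subst nn_integral_density) (auto simp: ennreal_mult)
  also have "\<dots> = ennreal (\<integral>v. std_normal_density v * exp_laplace_tail (1 / D) L v \<partial>lborel)"
    using exp_laplace_tail_bounds[OF p L]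
    by (intro nn_integral_eq_integral integrable_std_normal_exp_laplace_tail[OF p L]) auto
  finally show ?thesis
    using exp_laplace_tail_bounds[OF p L] by (simp add: measure_def integral_nonneg_AE)
qed

lemma measurable_id_subalgebra:
  assumes "subalgebra M F"
  shows "(\<lambda>x. x) \<in> M \<rightarrow>\<^sub>M F"
  using assms by (auto simp: subalgebra_def intro!: measurableI dest: sets.sets_into_space)

lemma Int_stable_vimage_sets: "Int_stable {f -` A \<inter> S | A. A \<in> sets R}"
proof (safe intro!: Int_stableI)
  fix A B assume "A \<in> sets R" "B \<in> sets R"
  then show "\<exists>C. (f -` A \<inter> S) \<inter> (f -` B \<inter> S) = f -` C \<inter> S \<and> C \<in> sets R"
    by (intro exI[of _ "A \<inter> B"]) auto
qed

lemma sigma_sets_vimage_Pair_subset: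
  assumes X: "X \<in> \<Omega> \<rightarrow> space S" and Y: "Y \<in> \<Omega> \<rightarrow> space T"
  shows "sigma_sets \<Omega> {(\<lambda>x. (X x, Y x)) -` A \<inter> \<Omega> | A. A \<in> sets (S \<Otimes>\<^sub>M T)}
           \<subseteq> sigma_sets \<Omega> ({X -` A \<inter> \<Omega> | A. A \<in> sets S} \<union> {Y -` A \<inter> \<Omega> | A. A \<in> sets T})"
    (is "_ \<subseteq> sigma_sets \<Omega> (?GX \<union> ?GY)")
proof -
  define N where "N = sigma \<Omega> (?GX \<union> ?GY)"
  have "?GX \<union> ?GY \<subseteq> Pow \<Omega>" by auto
  then have space_N: "space N = \<Omega>" and sets_N: "sets N = sigma_sets \<Omega> (?GX \<union> ?GY)"
    unfolding N_def by (simp_all add: space_measure_of sets_measure_of)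
  have "X \<in> N \<rightarrow>\<^sub>M S"
  proof (rule measurableI)
    fix A assume "A \<in> sets S"
    then show "X -` A \<inter> space N \<in> sets N"
      unfolding space_N sets_N by (blast intro: sigma_sets.Basic)
  qed (use X in \<open>auto simp: space_N\<close>)
  moreover have "Y \<in> N \<rightarrow>\<^sub>M T"
  proof (rule measurableI)
    fix A assume "A \<in> sets T"
    then show "Y -` A \<inter> space N \<in> sets N"
      unfolding space_N sets_N by (blast intro: sigma_sets.Basic)
  qed (use Y in \<open>auto simp: space_N\<close>)
  ultimately have "(\<lambda>x. (X x, Y x)) \<in> N \<rightarrow>\<^sub>M S \<Otimes>\<^sub>M T"
    by (rule measurable_Pair)
  from measurable_sets[OF this] show ?thesis
    unfolding space_N sets_N by (intro sigma_sets_mono) blast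
qed

lemma (in prob_space) distr_pair_eq_pair_measure:
  assumes X: "random_variable S X" and Y: "random_variable T Y"
    and indep: "indep_set (sigma_sets (space M) {X -` A \<inter> space M | A. A \<in> sets S})
                          (sigma_sets (space M) {Y -` A \<inter> space M | A. A \<in> sets T})"
  shows "distr M S X \<Otimes>\<^sub>M distr M T Y = distr M (S \<Otimes>\<^sub>M T) (\<lambda>x. (X x, Y x))"
proof -
  interpret PX: prob_space "distr M S X" by (rule prob_space_distr[OF X])
  interpret PY: prob_space "distr M T Y" by (rule prob_space_distr[OF Y])
  have XY: "random_variable (S \<Otimes>\<^sub>M T) (\<lambda>x. (X x, Y x))"
    using X Y by (rule measurable_Pair)
  show ?thesis
  proof (rule pair_measure_eqI)
    fix A B assume "A \<in> sets (distr M S X)" "B \<in> sets (distr M T Y)"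
    then have A: "A \<in> sets S" and B: "B \<in> sets T" by auto
    have "(\<lambda>x. (X x, Y x)) -` (A \<times> B) \<inter> space M = (X -` A \<inter> space M) \<inter> (Y -` B \<inter> space M)"
      by auto
    moreover have "prob ((X -` A \<inter> space M) \<inter> (Y -` B \<inter> space M))
        = prob (X -` A \<inter> space M) * prob (Y -` B \<inter> space M)"
      using A B by (intro indep_setD[OF indep] sigma_sets.Basic) auto
    ultimately show "emeasure (distr M S X) A * emeasure (distr M T Y) B
        = emeasure (distr M (S \<Otimes>\<^sub>M T) (\<lambda>x. (X x, Y x))) (A \<times> B)"
      using A B X Y XY by (simp add: emeasure_distr emeasure_eq_measure ennreal_mult)
  qed (simp_all add: PX.sigma_finite_measure_axioms PY.sigma_finite_measure_axioms
      cong: sets_pair_measure_cong)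
qed

lemma (in prob_space) indep_set_mono:
  assumes "indep_set A B" "A' \<subseteq> A" "B' \<subseteq> B"
  shows "indep_set A' B'"
  using assms unfolding indep_set_def by (elim indep_sets_mono_sets) (auto split: bool.split)

lemma (in prob_space) indep_set_collect_sigma:
  assumes indep: "indep_sets E K" and stable: "\<And>i. i \<in> K \<Longrightarrow> Int_stable (E i)"
    and "I \<union> J \<subseteq> K" "I \<inter> J = {}"
  shows "indep_set (sigma_sets (space M) (\<Union>i\<in>I. E i)) (sigma_sets (space M) (\<Union>i\<in>J. E i))"
proof -
  have "indep_sets (\<lambda>b. sigma_sets (space M) (\<Union>i\<in>case_bool I J b. E i)) UNIV"
    using assms
    by (intro indep_sets_collect_sigma[OF indep_sets_mono_index[OF _ indep]])
      (auto simp: disjoint_family_on_def split: bool.splits)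
  moreover have "(\<lambda>b. sigma_sets (space M) (\<Union>i\<in>case_bool I J b. E i)) =
      case_bool (sigma_sets (space M) (\<Union>i\<in>I. E i)) (sigma_sets (space M) (\<Union>i\<in>J. E i))"
    by (rule ext) (simp split: bool.split)
  ultimately show ?thesis
    unfolding indep_set_def by simp
qed

lemma (in prob_space) distr_pair_eq_of_indep_generators:
  assumes F: "subalgebra M F"
    and X: "random_variable S X" and Y: "random_variable T Y"
    and indep: "indep_sets (\<lambda>i::nat. if i = 0 then {X -` A \<inter> space M | A. A \<in> sets S}
                  else if i = 1 then {Y -` A \<inter> space M | A. A \<in> sets T}
                  else sets F) {0, 1, 2}"
  shows "distr M F (\<lambda>x. x) \<Otimes>\<^sub>M distr M (S \<Otimes>\<^sub>M T) (\<lambda>x. (X x, Y x))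
           = distr M (F \<Otimes>\<^sub>M (S \<Otimes>\<^sub>M T)) (\<lambda>x. (x, X x, Y x))"
    and "distr M S X \<Otimes>\<^sub>M distr M T Y = distr M (S \<Otimes>\<^sub>M T) (\<lambda>x. (X x, Y x))"
proof -
  define E where "E = (\<lambda>i::nat. if i = 0 then {X -` A \<inter> space M | A. A \<in> sets S}
                  else if i = 1 then {Y -` A \<inter> space M | A. A \<in> sets T}
                  else sets F)"
  have space_F: "space F = space M"
    using F by (simp add: subalgebra_def)
  have Int_stable: "Int_stable (E i)" for i
    using Int_stable_vimage_sets[of X "space M" S] Int_stable_vimage_sets[of Y "space M" T]
      sets.Int_stable[of F]
    by (simp add: E_def)
  note collect = indep_set_collect_sigma[OF indep[folded E_def] Int_stable]
  have F_gen: "sigma_sets (space M) {(\<lambda>x. x) -` A \<inter> space M |A. A \<in> sets F}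
      \<subseteq> sigma_sets (space M) (E 2)"
    using sets.sets_into_space[of _ F] space_F
    by (intro sigma_sets_mono') (auto simp: E_def Int_absorb2)
  have XY_gen: "sigma_sets (space M) {(\<lambda>x. (X x, Y x)) -` A \<inter> space M |A. A \<in> sets (S \<Otimes>\<^sub>M T)}
      \<subseteq> sigma_sets (space M) (E 0 \<union> E 1)"
    using sigma_sets_vimage_Pair_subset[of X "space M" S Y T] X Y
    by (simp add: E_def measurable_def)
  have "indep_set (sigma_sets (space M) (E 2)) (sigma_sets (space M) (E 0 \<union> E 1))"
    using collect[of "{2}" "{0, 1}"] by simp
  then show "distr M F (\<lambda>x. x) \<Otimes>\<^sub>M distr M (S \<Otimes>\<^sub>M T) (\<lambda>x. (X x, Y x))
           = distr M (F \<Otimes>\<^sub>M (S \<Otimes>\<^sub>M T)) (\<lambda>x. (x, X x, Y x))"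
    by (intro distr_pair_eq_pair_measure[OF measurable_id_subalgebra[OF F] measurable_Pair[OF X Y]]
        indep_set_mono[OF _ F_gen XY_gen])
  show "distr M S X \<Otimes>\<^sub>M distr M T Y = distr M (S \<Otimes>\<^sub>M T) (\<lambda>x. (X x, Y x))"
    using collect[of "{0}" "{1}"] by (intro distr_pair_eq_pair_measure[OF X Y]) (simp add: E_def)
qed

lemma (in prob_space) emeasure_graph_eq_nn_integral_sections:
  assumes F_id: "random_variable F (\<lambda>x. x)" and W: "random_variable N W"
    and indep: "distr M F (\<lambda>x. x) \<Otimes>\<^sub>M distr M N W = distr M (F \<Otimes>\<^sub>M N) (\<lambda>x. (x, W x))"
    and Q: "Q \<in> sets (F \<Otimes>\<^sub>M N)"
  shows "emeasure M {x \<in> space M. (x, W x) \<in> Q} = (\<integral>\<^sup>+x. emeasure (distr M N W) (Pair x -` Q) \<partial>M)"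
proof -
  interpret PW: prob_space "distr M N W" by (rule prob_space_distr[OF W])
  have Q': "Q \<in> sets (distr M F (\<lambda>x. x) \<Otimes>\<^sub>M distr M N W)"
    using Q by (simp cong: sets_pair_measure_cong)
  have "emeasure M {x \<in> space M. (x, W x) \<in> Q} = emeasure (distr M (F \<Otimes>\<^sub>M N) (\<lambda>x. (x, W x))) Q"
    using Q F_id W
    by (subst emeasure_distr) (auto intro: measurable_Pair simp: vimage_def Int_def conj_commute)
  also have "\<dots> = (\<integral>\<^sup>+x. emeasure (distr M N W) (Pair x -` Q) \<partial>distr M F (\<lambda>x. x))"
    unfolding indep[symmetric] using Q' by (rule PW.emeasure_pair_measure_alt)
  also have "\<dots> = (\<integral>\<^sup>+x. emeasure (distr M N W) (Pair x -` Q) \<partial>M)"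
    using Q' PW.measurable_emeasure_Pair[of Q "distr M F (\<lambda>x. x)"]
    by (subst nn_integral_distr[OF F_id]) auto
  finally show ?thesis .
qed

lemma (in prob_space) measure_Int_graph_eq_integral:
  assumes F: "subalgebra M F" and W: "random_variable N W"
    and indep: "distr M F (\<lambda>x. x) \<Otimes>\<^sub>M distr M N W = distr M (F \<Otimes>\<^sub>M N) (\<lambda>x. (x, W x))"
    and Q: "Q \<in> sets (F \<Otimes>\<^sub>M N)" and A: "A \<in> sets F"
  shows "measure M (A \<inter> {y \<in> space M. (y, W y) \<in> Q})
           = (\<integral>x. indicator A x * measure (distr M N W) (Pair x -` Q) \<partial>M)"
proof -
  interpret PW: prob_space "distr M N W" by (rule prob_space_distr[OF W])
  note F_id = measurable_id_subalgebra[OF F]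
  define \<Phi> where "\<Phi> x = measure (distr M N W) (Pair x -` Q)" for x
  have "\<Phi> \<in> borel_measurable F"
    unfolding \<Phi>_def measure_def
    using Q PW.measurable_emeasure_Pair[of Q F] by (simp cong: sets_pair_measure_cong)
  with F have [measurable]: "\<Phi> \<in> borel_measurable M"
    by (rule measurable_from_subalg)
  have [measurable]: "A \<in> sets M"
    using F A by (auto simp: subalgebra_def)
  have \<Phi>_bounds: "0 \<le> \<Phi> x" "\<Phi> x \<le> 1" for x
    by (simp_all add: \<Phi>_def)
  have QA: "Q \<inter> (A \<times> space N) \<in> sets (F \<Otimes>\<^sub>M N)"
    using Q A by auto
  have "Pair x -` Q \<subseteq> space N" for x
    using sets.sets_into_space[OF Q] by (auto simp: space_pair_measure)
  then have sections: "emeasure (distr M N W) (Pair x -` (Q \<inter> (A \<times> space N)))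
      = ennreal (indicator A x * \<Phi> x)" for x
    by (auto simp: \<Phi>_def PW.emeasure_eq_measure indicator_def Int_absorb2)
  have "A \<inter> {y \<in> space M. (y, W y) \<in> Q} = {x \<in> space M. (x, W x) \<in> Q \<inter> (A \<times> space N)}"
    using sets.sets_into_space[OF \<open>A \<in> sets M\<close>] W by (auto simp: measurable_space)
  then have "emeasure M (A \<inter> {y \<in> space M. (y, W y) \<in> Q}) = (\<integral>\<^sup>+x. ennreal (indicator A x * \<Phi> x) \<partial>M)"
    unfolding sections[symmetric]
    by (simp only: emeasure_graph_eq_nn_integral_sections[OF F_id W indep QA])
  also have "\<dots> = ennreal (\<integral>x. indicator A x * \<Phi> x \<partial>M)"
    using \<Phi>_bounds
    by (intro nn_integral_eq_integral integrable_const_bound[where B = 1])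
      (auto simp: indicator_def)
  finally show ?thesis
    using \<Phi>_bounds by (simp add: measure_def integral_nonneg_AE \<Phi>_def)
qed

lemma (in prob_space) real_cond_exp_indicator_graph:
  assumes F: "subalgebra M F" and W: "random_variable N W"
    and indep: "distr M F (\<lambda>x. x) \<Otimes>\<^sub>M distr M N W = distr M (F \<Otimes>\<^sub>M N) (\<lambda>x. (x, W x))"
    and Q: "Q \<in> sets (F \<Otimes>\<^sub>M N)"
  shows "AE x in M. real_cond_exp M F (indicator {y \<in> space M. (y, W y) \<in> Q}) x
           = measure (distr M N W) (Pair x -` Q)"
proof -
  interpret sigma_finite_subalgebra M F
    using F finite_measure_axioms
    by (intro finite_measure_subalgebra_is_sigma_finite)
      (simp add: finite_measure_subalgebra_def finite_measure_subalgebra_axioms_def)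
  interpret PW: prob_space "distr M N W" by (rule prob_space_distr[OF W])
  note F_id = measurable_id_subalgebra[OF F]
  define S where "S = {y \<in> space M. (y, W y) \<in> Q}"
  define \<Phi> where "\<Phi> x = measure (distr M N W) (Pair x -` Q)" for x
  have \<Phi>_F: "\<Phi> \<in> borel_measurable F"
    unfolding \<Phi>_def measure_def
    using Q PW.measurable_emeasure_Pair[of Q F] by (simp cong: sets_pair_measure_cong)
  have [measurable]: "\<Phi> \<in> borel_measurable M"
    by (rule measurable_from_subalg[OF F \<Phi>_F])
  have [measurable]: "S \<in> sets M"
    unfolding S_def using Q F_id W by (intro measurable_sets_Collect[OF measurable_Pair]) auto
  show ?thesis
    unfolding S_def[symmetric] \<Phi>_def[symmetric]
  proof (rule real_cond_exp_charact)
    fix A assume A: "A \<in> sets F"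
    then have "space M \<inter> (A \<inter> S) = A \<inter> S"
      using F sets.sets_into_space by (fastforce simp: subalgebra_def)
    then show "(\<integral>x\<in>A. indicator S x \<partial>M) = (\<integral>x\<in>A. \<Phi> x \<partial>M)"
      using measure_Int_graph_eq_integral[OF F W indep Q A]
      unfolding S_def[symmetric] \<Phi>_def[symmetric]
      by (simp add: set_lebesgue_integral_def indicator_inter_arith[symmetric] Int_commute)
  next
    show "integrable M (indicator S :: 'a \<Rightarrow> real)"
      by (intro integrable_const_bound[where B = 1]) (auto simp: indicator_def)
    show "integrable M \<Phi>"
      by (intro integrable_const_bound[where B = 1]) (auto simp: \<Phi>_def)
  qed (rule \<Phi>_F)
qed

locale laplace_log_volatility = prob_space +
  fixes F :: "'a measure" and Hbar h z :: "'a \<Rightarrow> real" and \<Delta> :: real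
  assumes F: "subalgebra M F"
    and Hbar[measurable]: "Hbar \<in> borel_measurable F"
    and h_distr: "distributed M lborel h (laplace_density \<Delta>)"
    and z_distr: "distributed M lborel z std_normal_density"
    and indep: "indep_sets
        (\<lambda>i::nat. if i = 0 then {z -` A \<inter> space M | A. A \<in> sets borel}
                  else if i = 1 then {h -` A \<inter> space M | A. A \<in> sets borel}
                  else sets F) {0, 1, 2}"
    and \<Delta>: "\<Delta> > 0"
begin

lemma real_cond_exp_tail_eq_integral_std_normal:
  assumes \<Lambda>: "\<Lambda> > 0"
  shows "AE x in M. real_cond_exp M F (indicator {y \<in> space M. \<bar>exp (Hbar y + h y) * z y\<bar> \<ge> \<Lambda>}) x
           = (\<integral>v. std_normal_density v * exp_laplace_tail (1 / \<Delta>) (\<Lambda> / exp (Hbar x)) v \<partial>lborel)"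
proof -
  have z[measurable]: "random_variable borel z" and h[measurable]: "random_variable borel h"
    using distributed_measurable[OF z_distr] distributed_measurable[OF h_distr] by simp_all
  have space_F: "space F = space M"
    using F by (simp add: subalgebra_def)
  note laws = distr_pair_eq_of_indep_generators[OF F z h indep]
  have law: "distr M (borel \<Otimes>\<^sub>M borel) (\<lambda>x. (z x, h x)) =
      density lborel (\<lambda>v. ennreal (std_normal_density v))
        \<Otimes>\<^sub>M density lborel (\<lambda>u. ennreal (laplace_density \<Delta> u))"
    unfolding laws(2)[symmetric]
    using distributed_distr_eq_density[OF z_distr] distributed_distr_eq_density[OF h_distr]
      distr_cong[of M M borel lborel z z] distr_cong[of M M borel lborel h h]
    by simp
  define Q where "Q = {w \<in> space (F \<Otimes>\<^sub>M (borel \<Otimes>\<^sub>M borel)).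
      \<Lambda> \<le> \<bar>exp (Hbar (fst w) + snd (snd w)) * fst (snd w)\<bar>}"
  have "Q \<in> sets (F \<Otimes>\<^sub>M (borel \<Otimes>\<^sub>M borel))"
    unfolding Q_def by measurable
  from real_cond_exp_indicator_graph[OF F measurable_Pair[OF z h] laws(1) this]
  have cond: "AE x in M. real_cond_exp M F (indicator {y \<in> space M. (y, z y, h y) \<in> Q}) x
          = measure (distr M (borel \<Otimes>\<^sub>M borel) (\<lambda>x. (z x, h x))) (Pair x -` Q)" .
  have events: "{y \<in> space M. (y, z y, h y) \<in> Q} = {y \<in> space M. \<bar>exp (Hbar y + h y) * z y\<bar> \<ge> \<Lambda>}"
    by (auto simp: Q_def space_pair_measure space_F)
  have sections: "Pair x -` Q = {w. \<Lambda> / exp (Hbar x) \<le> exp (snd w) * \<bar>fst w\<bar>}"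
    if "x \<in> space M" for x
    using that
    by (auto simp: Q_def space_pair_measure space_F exp_add abs_mult pos_divide_le_eq mult_ac)
  show ?thesis
    using cond AE_space
    by eventually_elim (simp add: events sections law measure_std_normal_laplace_exp_ge[OF \<Delta>] \<Lambda>)
qed

lemma real_cond_exp_tail_asymptotics:
  assumes \<Lambda>: "\<Lambda> > 0"
  shows "AE x in M. \<Lambda> / (sqrt 2 * exp (Hbar x)) \<ge> 1 + 2 * (1 / \<Delta>) \<longrightarrow>
           \<bar>real_cond_exp M F (indicator {y \<in> space M. \<bar>exp (Hbar y + h y) * z y\<bar> \<ge> \<Lambda>}) x
             - 1 / (2 * sqrt pi) * Gamma ((1 + 1 / \<Delta>) / 2)
                 * (\<Lambda> / (sqrt 2 * exp (Hbar x))) powr (- 1 / \<Delta>)\<bar>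
           \<le> 16 * (1 / \<Delta>)\<^sup>2 * (\<Lambda> / (sqrt 2 * exp (Hbar x))) powr (-5)
               * exp (- ((\<Lambda> / (sqrt 2 * exp (Hbar x)))\<^sup>2))"
  using real_cond_exp_tail_eq_integral_std_normal[OF \<Lambda>]
proof eventually_elim
  case (elim x)
  have p: "1 / \<Delta> > 0" using \<Delta> by simp
  define L where "L = \<Lambda> / exp (Hbar x)"
  have L_scaled: "\<Lambda> / (sqrt 2 * exp (Hbar x)) = L / sqrt 2"
    by (simp add: L_def field_simps)
  have "L / sqrt 2 \<le> L"
    using \<Lambda> by (simp add: L_def divide_le_eq)
  then show ?case
    unfolding elim L_def[symmetric] L_scaled minus_divide_left[symmetric]
    by (intro impI std_normal_exp_laplace_tail_asymptotics[OF p]) (use p in linarith)+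
qed

end

theorem theorem2p3:
  fixes M F :: "'a measure"
    and Hbar h z :: "'a \<Rightarrow> real"
    and \<Delta> :: real
  assumes prob: "prob_space M"
    and subalg: "subalgebra M F"
    and Hbar_meas: "Hbar \<in> borel_measurable F"
    and h_distr: "distributed M lborel h (laplace_density \<Delta>)"
    and z_distr: "distributed M lborel z std_normal_density"
    and indep: "prob_space.indep_sets M
        (\<lambda>i::nat. if i = 0 then {z -` A \<inter> space M | A. A \<in> sets borel}
                  else if i = 1 then {h -` A \<inter> space M | A. A \<in> sets borel}
                  else sets F) {0, 1, 2}"
    and Delta_pos: "\<Delta> > 0"
    and Delta_def: "\<Delta> = prob_space.expectation M (\<lambda>x. \<bar>h x\<bar>)"
    and Hbar_cond: "AE x in M. Hbar x = real_cond_exp M F (\<lambda>y. Hbar y + h y) x"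
  shows "\<exists>C L0. \<forall>\<Lambda>>0. AE x in M.
           \<Lambda> / (sqrt 2 * exp (Hbar x)) \<ge> L0 \<longrightarrow>
           \<bar>real_cond_exp M F
               (indicator {y \<in> space M. \<bar>exp (Hbar y + h y) * z y\<bar> \<ge> \<Lambda>}) x
             - 1 / (2 * sqrt pi) * Gamma ((1 + 1 / \<Delta>) / 2)
                 * (\<Lambda> / (sqrt 2 * exp (Hbar x))) powr (- 1 / \<Delta>)\<bar>
           \<le> C * (\<Lambda> / (sqrt 2 * exp (Hbar x))) powr (-5)
                 * exp (- ((\<Lambda> / (sqrt 2 * exp (Hbar x)))\<^sup>2))"
proof -
  interpret prob_space M by (rule prob)
  interpret laplace_log_volatility M F Hbar h z \<Delta>
    by unfold_locales (fact subalg Hbar_meas h_distr z_distr indep Delta_pos)+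
  \<comment> \<open>\<open>Delta_def\<close> and \<open>Hbar_cond\<close> only identify \<open>\<Delta>\<close> with E|h| and Hbar with E(H | F); the estimate
      holds without them.\<close>
  show ?thesis
    using real_cond_exp_tail_asymptotics by blast
qed

end
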